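(* Let $\mathfrak a$ be an abelian ideal of $\mathfrak b$, $\mathcal S\in\mathfrak S_{\mathfrak a}$, $\mathcal M_{\mathcal S}=\{\gamma+\delta\mid\gamma\in\mathcal S,\ \delta\in\Delta^+,\ \gamma+\delta\in\Delta^+\}$ and $J_{\mathcal S}=\Delta_{\mathfrak a}\setminus(\mathcal S\sqcup\mathcal M_{\mathcal S})$. Suppose $\gamma^*\in\max(J_{\mathcal S})$ and $\gamma^*-\delta\in J_{\mathcal S}$ for some $\delta\in\Delta^+$. Let $\mu\in J_{\mathcal S}$. (1) If $\mu-\delta\in\Delta_{\mathfrak a}$, then $\mu-\delta\in J_{\mathcal S}$. (2) If $\mu-2\delta\in\Delta_{\mathfrak a}$, then both $\mu-\delta$ and $\mu-2\delta$ belong to $J_{\mathcal S}$.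
   Context: Let $G$ be a connected simple algebraic group over an algebraically closed field of characteristic zero, $B$ a Borel subgroup, $T\subset B$ a maximal torus, $\mathfrak b=\mathrm{Lie}(B)$, $\Delta$ the root system of $(G,T)$, $\Delta^+$ the positive roots determined by $B$, with partial order $\mu\preccurlyeq\nu$ iff $\nu-\mu$ is a nonnegative integral combination of simple roots; $\max(M)$ is the set of maximal elements of $M$. An abelian ideal of $\mathfrak b$ is a subspace $\mathfrak a\subset\mathfrak b$ with $[\mathfrak b,\mathfrak a]\subset\mathfrak a$, $[\mathfrak a,\mathfrak a]=0$; it is the sum of root spaces for roots in $\Delta_{\mathfrak a}\subset\Delta^+$. Two distinct roots are strongly orthogonal if neither their sum nor their difference is a root; $\mathfrak S_{\mathfrak a}$ is the set of strongly orthogonal subsets of $\Delta_{\mathfrak a}$. *)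

theory Defs
  imports "HOL-Analysis.Analysis"
begin

definition refl_root :: "'a::euclidean_space \<Rightarrow> 'a \<Rightarrow> 'a" where
  "refl_root \<alpha> \<beta> = \<beta> - (2 * (\<beta> \<bullet> \<alpha>) / (\<alpha> \<bullet> \<alpha>)) *\<^sub>R \<alpha>"

definition root_system :: "'a::euclidean_space set \<Rightarrow> bool" where
  "root_system R \<longleftrightarrow> finite R \<and> 0 \<notin> R \<and> span R = UNIV \<and>
     (\<forall>\<alpha>\<in>R. \<forall>\<beta>\<in>R. refl_root \<alpha> \<beta> \<in> R) \<and>
     (\<forall>\<alpha>\<in>R. \<forall>\<beta>\<in>R. 2 * (\<beta> \<bullet> \<alpha>) / (\<alpha> \<bullet> \<alpha>) \<in> \<int>) \<and>
     (\<forall>\<alpha>\<in>R. \<forall>c::real. c *\<^sub>R \<alpha> \<in> R \<longrightarrow> c = 1 \<or> c = -1)"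

definition irreducible_rs :: "'a::euclidean_space set \<Rightarrow> bool" where
  "irreducible_rs R \<longleftrightarrow> R \<noteq> {} \<and>
     \<not> (\<exists>R1 R2. R1 \<noteq> {} \<and> R2 \<noteq> {} \<and> R = R1 \<union> R2 \<and>
          (\<forall>\<alpha>\<in>R1. \<forall>\<beta>\<in>R2. \<alpha> \<bullet> \<beta> = 0))"

definition nonneg_comb :: "'a::euclidean_space set \<Rightarrow> 'a \<Rightarrow> bool" where
  "nonneg_comb P v \<longleftrightarrow> (\<exists>c::'a \<Rightarrow> nat. v = (\<Sum>\<beta>\<in>P. real (c \<beta>) *\<^sub>R \<beta>))"

definition is_base :: "'a::euclidean_space set \<Rightarrow> 'a set \<Rightarrow> bool" where
  "is_base R P \<longleftrightarrow> P \<subseteq> R \<and> independent P \<and>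
     (\<forall>\<alpha>\<in>R. nonneg_comb P \<alpha> \<or> nonneg_comb P (- \<alpha>))"

definition pos_roots :: "'a::euclidean_space set \<Rightarrow> 'a set \<Rightarrow> 'a set" where
  "pos_roots R P = {\<alpha>\<in>R. nonneg_comb P \<alpha>}"

definition root_le :: "'a::euclidean_space set \<Rightarrow> 'a \<Rightarrow> 'a \<Rightarrow> bool" where
  "root_le P \<mu> \<nu> \<longleftrightarrow> nonneg_comb P (\<nu> - \<mu>)"

definition max_elems :: "'a::euclidean_space set \<Rightarrow> 'a set \<Rightarrow> 'a set" where
  "max_elems P M = {\<mu>\<in>M. \<forall>\<nu>\<in>M. root_le P \<mu> \<nu> \<longrightarrow> \<nu> = \<mu>}"

text \<open>Root set \<open>\<Delta>_a\<close> of an abelian ideal \<open>a\<close> of \<open>b\<close>: \<open>a = \<Oplus>_{\<mu>\<in>A} g_\<mu>\<close>;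
  \<open>[b,a] \<subseteq> a\<close> means closure under adding positive roots, \<open>[a,a]=0\<close> means
  no sum of two roots of \<open>A\<close> is a root (char 0, \<open>[g_\<alpha>,g_\<beta>] = g_{\<alpha>+\<beta>}\<close>).\<close>
definition abelian_ideal_roots :: "'a::euclidean_space set \<Rightarrow> 'a set \<Rightarrow> 'a set \<Rightarrow> bool" where
  "abelian_ideal_roots R P A \<longleftrightarrow> A \<subseteq> pos_roots R P \<and>
     (\<forall>\<mu>\<in>A. \<forall>\<alpha>\<in>pos_roots R P. \<mu> + \<alpha> \<in> R \<longrightarrow> \<mu> + \<alpha> \<in> A) \<and>
     (\<forall>\<mu>\<in>A. \<forall>\<nu>\<in>A. \<mu> + \<nu> \<notin> R)"

definition strongly_orth :: "'a::euclidean_space set \<Rightarrow> 'a \<Rightarrow> 'a \<Rightarrow> bool" where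
  "strongly_orth R \<alpha> \<beta> \<longleftrightarrow> \<alpha> \<noteq> \<beta> \<and> \<alpha> + \<beta> \<notin> R \<and> \<alpha> - \<beta> \<notin> R"

definition so_subsets :: "'a::euclidean_space set \<Rightarrow> 'a set \<Rightarrow> 'a set set" where
  "so_subsets R A = {S. S \<subseteq> A \<and> (\<forall>\<alpha>\<in>S. \<forall>\<beta>\<in>S. \<alpha> \<noteq> \<beta> \<longrightarrow> strongly_orth R \<alpha> \<beta>)}"

definition M_set :: "'a::euclidean_space set \<Rightarrow> 'a set \<Rightarrow> 'a set \<Rightarrow> 'a set" where
  "M_set R P S = {\<gamma> + \<delta> | \<gamma> \<delta>. \<gamma> \<in> S \<and> \<delta> \<in> pos_roots R P \<and> \<gamma> + \<delta> \<in> pos_roots R P}"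

definition J_set :: "'a::euclidean_space set \<Rightarrow> 'a set \<Rightarrow> 'a set \<Rightarrow> 'a set \<Rightarrow> 'a set" where
  "J_set R P A S = A - (S \<union> M_set R P S)"

end

theory Submission
  imports Defs
begin

text \<open>Write \<open>J\<close> for \<open>J_S\<close> and \<open>x = \<gamma>* - \<delta>\<close>. Roots of an abelian ideal have pairwise nonnegative
  inner products, and if \<open>x \<in> J\<close> has positive inner product with some \<open>\<gamma> \<in> S\<close>, then
  \<open>x - \<gamma>\<close> is a root which cannot be positive (else \<open>x \<in> M_S\<close>), so \<open>x \<preccurlyeq> \<gamma>\<close>.
  Suppose \<open>\<mu> - \<delta> = \<gamma> + \<epsilon> \<in> M_S\<close>. Then \<open>(\<mu>,\<gamma>) \<le> 0\<close> (else \<open>\<mu> \<preccurlyeq> \<gamma> \<preccurlyeq> \<mu>\<close>), while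
  \<open>(\<gamma>+\<epsilon>,\<gamma>) > 0\<close> (else reflecting \<open>\<epsilon>\<close> in \<open>\<gamma>\<close> makes \<open>(\<gamma>+\<epsilon>)+\<gamma>\<close> a root), so \<open>(\<delta>,\<gamma>) < 0\<close>
  and \<open>(x,\<gamma>) > 0\<close>. Hence \<open>x \<preccurlyeq> \<gamma> \<preccurlyeq> \<mu> - \<delta>\<close>, i.e. \<open>\<gamma>* \<preccurlyeq> \<mu>\<close>; maximality forces \<open>\<mu> = \<gamma>*\<close>, and then
  \<open>x = \<gamma> \<in> S\<close>, a contradiction. Part (2) reduces to part (1) applied twice, since
  \<open>\<mu> - \<delta>\<close> lies in the \<open>\<delta>\<close>-string through \<open>\<mu> - 2\<delta>\<close> and \<open>\<mu>\<close>.\<close>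

lemma nonneg_comb_add:
  assumes "nonneg_comb P u" "nonneg_comb P v"
  shows "nonneg_comb P (u + v)"
proof -
  obtain c d where c: "u = (\<Sum>\<beta>\<in>P. real (c \<beta>) *\<^sub>R \<beta>)" and d: "v = (\<Sum>\<beta>\<in>P. real (d \<beta>) *\<^sub>R \<beta>)"
    using assms unfolding nonneg_comb_def by blast
  have "u + v = (\<Sum>\<beta>\<in>P. real (c \<beta> + d \<beta>) *\<^sub>R \<beta>)"
    unfolding c d by (simp add: sum.distrib scaleR_add_left)
  thus ?thesis unfolding nonneg_comb_def by (rule exI[where x="\<lambda>\<beta>. c \<beta> + d \<beta>"])
qed

lemma nonneg_comb_antisym:
  assumes "independent P" "nonneg_comb P v" "nonneg_comb P (- v)"
  shows "v = 0"
proof -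
  obtain c d where c: "v = (\<Sum>\<beta>\<in>P. real (c \<beta>) *\<^sub>R \<beta>)" and d: "- v = (\<Sum>\<beta>\<in>P. real (d \<beta>) *\<^sub>R \<beta>)"
    using assms unfolding nonneg_comb_def by blast
  have ind: "\<forall>e. (\<Sum>\<beta>\<in>P. e \<beta> *\<^sub>R \<beta>) = 0 \<longrightarrow> (\<forall>\<beta>\<in>P. e \<beta> = 0)"
    using assms(1) unfolding independent_explicit by auto
  have "(\<Sum>\<beta>\<in>P. real (c \<beta> + d \<beta>) *\<^sub>R \<beta>)
      = (\<Sum>\<beta>\<in>P. real (c \<beta>) *\<^sub>R \<beta>) + (\<Sum>\<beta>\<in>P. real (d \<beta>) *\<^sub>R \<beta>)"
    by (simp add: sum.distrib scaleR_add_left)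
  also have "\<dots> = v + - v" using c d by simp
  finally have "\<forall>\<beta>\<in>P. real (c \<beta> + d \<beta>) = 0"
    using spec[OF ind, of "\<lambda>\<beta>. real (c \<beta> + d \<beta>)"] by simp
  hence "\<forall>\<beta>\<in>P. c \<beta> = 0" by (metis add_is_0 of_nat_add of_nat_eq_0_iff)
  thus ?thesis unfolding c by simp
qed

lemma root_le_trans: "root_le P a b \<Longrightarrow> root_le P b c \<Longrightarrow> root_le P a c"
  unfolding root_le_def using nonneg_comb_add[of P "c - b" "b - a"] by simp

lemma root_le_antisym: "independent P \<Longrightarrow> root_le P a b \<Longrightarrow> root_le P b a \<Longrightarrow> a = b"
  unfolding root_le_def using nonneg_comb_antisym[of P "b - a"] by simp

lemma root_le_add_nonneg: "nonneg_comb P e \<Longrightarrow> root_le P a (a + e)"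
  unfolding root_le_def by simp

lemma root_le_add_right_cancel: "root_le P (a + c) (b + c) \<longleftrightarrow> root_le P a b"
  unfolding root_le_def by simp

lemma root_system_inner_self_pos: "root_system R \<Longrightarrow> \<alpha> \<in> R \<Longrightarrow> \<alpha> \<bullet> \<alpha> > 0"
  unfolding root_system_def by auto

lemma root_system_uminus:
  assumes "root_system R" "\<alpha> \<in> R"
  shows "- \<alpha> \<in> R"
proof -
  have "refl_root \<alpha> \<alpha> \<in> R" using assms unfolding root_system_def by blast
  moreover have "\<alpha> \<bullet> \<alpha> \<noteq> 0" using root_system_inner_self_pos[OF assms] by simp
  ultimately show ?thesis unfolding refl_root_def by (simp add: scaleR_2)
qed

text \<open>Equality in Cauchy--Schwarz: \<open>\<alpha> - c \<beta>\<close> then has squared length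
  \<open>(\<alpha>,\<alpha>) - (\<alpha>,\<beta>)\<^sup>2 / (\<beta>,\<beta>) = 0\<close>.\<close>
lemma scaleR_eq_of_inner_sq_eq:
  fixes \<alpha> \<beta> :: "'a::real_inner"
  assumes "\<beta> \<noteq> 0" and eq: "(\<alpha> \<bullet> \<beta>)\<^sup>2 = (\<alpha> \<bullet> \<alpha>) * (\<beta> \<bullet> \<beta>)"
  shows "\<alpha> = ((\<alpha> \<bullet> \<beta>) / (\<beta> \<bullet> \<beta>)) *\<^sub>R \<beta>"
proof -
  define c where "c = (\<alpha> \<bullet> \<beta>) / (\<beta> \<bullet> \<beta>)"
  have bb: "\<beta> \<bullet> \<beta> \<noteq> 0" using assms(1) by simp
  have "(\<alpha> - c *\<^sub>R \<beta>) \<bullet> (\<alpha> - c *\<^sub>R \<beta>) = \<alpha> \<bullet> \<alpha> - 2 * c * (\<alpha> \<bullet> \<beta>) + c\<^sup>2 * (\<beta> \<bullet> \<beta>)"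
    by (simp add: inner_diff_left inner_diff_right inner_commute power2_eq_square algebra_simps)
  also have "\<dots> = 0"
    using eq bb unfolding c_def by (simp add: power2_eq_square field_simps)
  finally show ?thesis unfolding c_def by simp
qed

lemma root_system_eq_or_eq_uminus_of_inner_sq_eq:
  assumes rs: "root_system R" and a: "\<alpha> \<in> R" and b: "\<beta> \<in> R"
    and eq: "(\<alpha> \<bullet> \<beta>)\<^sup>2 = (\<alpha> \<bullet> \<alpha>) * (\<beta> \<bullet> \<beta>)"
  shows "\<alpha> = \<beta> \<or> \<alpha> = - \<beta>"
proof -
  define c where "c = (\<alpha> \<bullet> \<beta>) / (\<beta> \<bullet> \<beta>)"
  have "\<beta> \<noteq> 0" using rs b unfolding root_system_def by auto
  hence "\<alpha> = c *\<^sub>R \<beta>" unfolding c_def by (rule scaleR_eq_of_inner_sq_eq[OF _ eq])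
  moreover have "c = 1 \<or> c = -1" using rs a b calculation unfolding root_system_def by metis
  ultimately show ?thesis by auto
qed

lemma root_system_diff_mem:
  assumes rs: "root_system R" and a: "\<alpha> \<in> R" and b: "\<beta> \<in> R"
    and pos: "\<alpha> \<bullet> \<beta> > 0" and ne: "\<alpha> \<noteq> \<beta>"
  shows "\<alpha> - \<beta> \<in> R"
proof -
  have aa: "\<alpha> \<bullet> \<alpha> > 0" and bb: "\<beta> \<bullet> \<beta> > 0"
    using root_system_inner_self_pos[OF rs] a b by auto
  obtain m n :: int where m: "2 * (\<alpha> \<bullet> \<beta>) / (\<beta> \<bullet> \<beta>) = m" and n: "2 * (\<beta> \<bullet> \<alpha>) / (\<alpha> \<bullet> \<alpha>) = n"
    using rs a b unfolding root_system_def by (metis Ints_cases)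
  have "real_of_int m > 0" "real_of_int n > 0"
    using m n pos aa bb by (auto simp flip: m n simp: inner_commute)
  hence "m \<ge> 1" "n \<ge> 1" by simp_all
  have not_parallel: "(\<alpha> \<bullet> \<beta>)\<^sup>2 \<noteq> (\<alpha> \<bullet> \<alpha>) * (\<beta> \<bullet> \<beta>)"
    using root_system_eq_or_eq_uminus_of_inner_sq_eq[OF rs a b] ne pos bb
    by (metis inner_minus_left neg_less_0_iff_less order.asym)
  have "real_of_int (m * n) = 4 * (\<alpha> \<bullet> \<beta>)\<^sup>2 / ((\<alpha> \<bullet> \<alpha>) * (\<beta> \<bullet> \<beta>))"
    using m n by (simp flip: m n add: inner_commute power2_eq_square field_simps)
  also have "\<dots> < 4"
    using Cauchy_Schwarz_ineq[of \<alpha> \<beta>] not_parallel aa bb by (simp add: divide_less_eq)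
  finally have "m * n < 4" by linarith
  moreover have "2 * 2 \<le> m * n" if "m \<ge> 2" "n \<ge> 2"
    using that by (intro mult_mono) auto
  ultimately have "m = 1 \<or> n = 1" using \<open>m \<ge> 1\<close> \<open>n \<ge> 1\<close> by linarith
  thus ?thesis
  proof
    assume "m = 1"
    hence "refl_root \<beta> \<alpha> = \<alpha> - \<beta>" unfolding refl_root_def using m pos by simp
    moreover have "refl_root \<beta> \<alpha> \<in> R" using rs a b unfolding root_system_def by blast
    ultimately show ?thesis by simp
  next
    assume "n = 1"
    hence "refl_root \<alpha> \<beta> = - (\<alpha> - \<beta>)" unfolding refl_root_def using n pos by (simp add: inner_commute)
    moreover have "refl_root \<alpha> \<beta> \<in> R" using rs a b unfolding root_system_def by blast
    ultimately show ?thesis using root_system_uminus[OF rs] by force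
  qed
qed

text \<open>The middle of a root string: \<open>\<alpha> - \<beta>\<close> is obtained either from \<open>\<alpha>\<close> by subtracting \<open>\<beta>\<close>
  or from \<open>\<alpha> - 2\<beta>\<close> by subtracting \<open>-\<beta>\<close>, according to the sign of \<open>(\<alpha>,\<beta>)\<close>.\<close>
lemma root_system_diff_mem_of_diff2:
  assumes rs: "root_system R" and a: "\<alpha> \<in> R" and b: "\<beta> \<in> R"
    and a2b: "\<alpha> - 2 *\<^sub>R \<beta> \<in> R" and ne: "\<alpha> \<noteq> \<beta>"
  shows "\<alpha> - \<beta> \<in> R"
proof (cases "\<alpha> \<bullet> \<beta> > 0")
  case True
  thus ?thesis using root_system_diff_mem[OF rs a b _ ne] by simp
next
  case False
  have "(\<alpha> - 2 *\<^sub>R \<beta>) \<bullet> (- \<beta>) = 2 * (\<beta> \<bullet> \<beta>) - \<alpha> \<bullet> \<beta>"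
    by (simp add: inner_diff_left)
  hence "(\<alpha> - 2 *\<^sub>R \<beta>) \<bullet> (- \<beta>) > 0"
    using False root_system_inner_self_pos[OF rs b] by linarith
  moreover have "\<alpha> - 2 *\<^sub>R \<beta> \<noteq> - \<beta>" using ne by (auto simp: scaleR_2)
  ultimately have "(\<alpha> - 2 *\<^sub>R \<beta>) - (- \<beta>) \<in> R"
    using root_system_diff_mem[OF rs a2b root_system_uminus[OF rs b]] by blast
  thus ?thesis by (simp add: scaleR_2 algebra_simps)
qed

lemma pos_roots_uminus_notin:
  assumes "root_system R" "is_base R P" "\<alpha> \<in> pos_roots R P"
  shows "- \<alpha> \<notin> pos_roots R P"
proof
  assume "- \<alpha> \<in> pos_roots R P"
  hence "\<alpha> = 0"
    using assms nonneg_comb_antisym[of P \<alpha>] unfolding pos_roots_def is_base_def by auto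
  thus False using assms unfolding pos_roots_def root_system_def by auto
qed

lemma abelian_ideal_roots_inner_nonneg:
  assumes rs: "root_system R" and base: "is_base R P" and ab: "abelian_ideal_roots R P A"
    and x: "x \<in> A" and y: "y \<in> A"
  shows "x \<bullet> y \<ge> 0"
proof (rule ccontr)
  assume "\<not> x \<bullet> y \<ge> 0"
  hence neg: "x \<bullet> (- y) > 0" by simp
  have xP: "x \<in> pos_roots R P" and yP: "y \<in> pos_roots R P"
    using ab x y unfolding abelian_ideal_roots_def by auto
  have "x \<noteq> - y" using pos_roots_uminus_notin[OF rs base yP] xP by auto
  hence "x - (- y) \<in> R"
    using root_system_diff_mem[OF rs _ root_system_uminus[OF rs] neg] xP yP
    unfolding pos_roots_def by auto
  thus False using ab x y unfolding abelian_ideal_roots_def by auto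
qed

text \<open>If \<open>(x,y) = 0\<close>, reflecting \<open>x - y\<close> in \<open>y\<close> gives the forbidden root \<open>x + y\<close>.\<close>
lemma abelian_ideal_roots_inner_pos:
  assumes rs: "root_system R" and base: "is_base R P" and ab: "abelian_ideal_roots R P A"
    and x: "x \<in> A" and y: "y \<in> A" and xy: "x - y \<in> R"
  shows "x \<bullet> y > 0"
proof -
  have yR: "y \<in> R" using ab y unfolding abelian_ideal_roots_def pos_roots_def by auto
  have "x \<bullet> y \<noteq> 0"
  proof
    assume "x \<bullet> y = 0"
    hence "2 * ((x - y) \<bullet> y) / (y \<bullet> y) = -2"
      using root_system_inner_self_pos[OF rs yR] by (simp add: inner_diff_left)
    hence "refl_root y (x - y) = x + y" unfolding refl_root_def by (simp add: scaleR_2)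
    moreover have "refl_root y (x - y) \<in> R" using rs yR xy unfolding root_system_def by blast
    ultimately show False using ab x y unfolding abelian_ideal_roots_def by auto
  qed
  thus ?thesis using abelian_ideal_roots_inner_nonneg[OF rs base ab x y] by simp
qed

lemma root_le_of_J_set_inner_pos:
  assumes rs: "root_system R" and base: "is_base R P" and ab: "abelian_ideal_roots R P A"
    and SA: "S \<subseteq> A" and x: "x \<in> J_set R P A S" and \<gamma>: "\<gamma> \<in> S" and pos: "x \<bullet> \<gamma> > 0"
  shows "root_le P x \<gamma>"
proof -
  have xP: "x \<in> pos_roots R P" and \<gamma>P: "\<gamma> \<in> pos_roots R P"
    using ab SA x \<gamma> unfolding J_set_def abelian_ideal_roots_def by auto
  have "x \<noteq> \<gamma>" using x \<gamma> unfolding J_set_def by auto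
  hence diff: "x - \<gamma> \<in> R"
    using root_system_diff_mem[OF rs _ _ pos] xP \<gamma>P unfolding pos_roots_def by auto
  have "\<not> nonneg_comb P (x - \<gamma>)"
  proof
    assume "nonneg_comb P (x - \<gamma>)"
    hence "\<gamma> + (x - \<gamma>) \<in> M_set R P S"
      using diff \<gamma> xP unfolding M_set_def pos_roots_def by fastforce
    thus False using x unfolding J_set_def by simp
  qed
  thus ?thesis using base diff unfolding is_base_def root_le_def by force
qed

lemma diff_notin_M_set:
  assumes rs: "root_system R" and base: "is_base R P" and ab: "abelian_ideal_roots R P A"
    and SA: "S \<subseteq> A" and max: "\<gamma>s \<in> max_elems P (J_set R P A S)"
    and \<delta>: "\<delta> \<in> pos_roots R P" and x: "\<gamma>s - \<delta> \<in> J_set R P A S"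
    and \<mu>: "\<mu> \<in> J_set R P A S" and \<mu>\<delta>: "\<mu> - \<delta> \<in> A"
  shows "\<mu> - \<delta> \<notin> M_set R P S"
proof
  assume "\<mu> - \<delta> \<in> M_set R P S"
  then obtain \<gamma> \<epsilon> where split: "\<mu> - \<delta> = \<gamma> + \<epsilon>" and \<gamma>: "\<gamma> \<in> S" and \<epsilon>: "\<epsilon> \<in> pos_roots R P"
    unfolding M_set_def by auto
  have ind: "independent P" using base unfolding is_base_def by simp
  have J_A: "J_set R P A S \<subseteq> A" unfolding J_set_def by auto
  have \<gamma>A: "\<gamma> \<in> A" using \<gamma> SA by auto
  have \<gamma>_le: "root_le P \<gamma> (\<mu> - \<delta>)"
    using \<epsilon> split root_le_add_nonneg unfolding pos_roots_def by auto
  have "\<mu> \<bullet> \<gamma> \<le> 0"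
  proof (rule ccontr)
    assume "\<not> \<mu> \<bullet> \<gamma> \<le> 0"
    hence "root_le P \<mu> \<gamma>" using root_le_of_J_set_inner_pos[OF rs base ab SA \<mu> \<gamma>] by simp
    moreover have "root_le P (\<mu> - \<delta>) \<mu>"
      using \<delta> root_le_add_nonneg[of P \<delta> "\<mu> - \<delta>"] unfolding pos_roots_def by simp
    ultimately have "\<mu> = \<gamma>" using \<gamma>_le root_le_antisym[OF ind] root_le_trans by metis
    thus False using \<mu> \<gamma> unfolding J_set_def by simp
  qed
  moreover have "(\<mu> - \<delta>) \<bullet> \<gamma> > 0"
    using abelian_ideal_roots_inner_pos[OF rs base ab \<mu>\<delta> \<gamma>A] split \<epsilon>
    unfolding pos_roots_def by simp
  ultimately have "\<delta> \<bullet> \<gamma> < 0" by (simp add: inner_diff_left)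
  moreover have "\<gamma>s \<bullet> \<gamma> \<ge> 0"
    using abelian_ideal_roots_inner_nonneg[OF rs base ab _ \<gamma>A] max J_A
    unfolding max_elems_def by auto
  ultimately have "(\<gamma>s - \<delta>) \<bullet> \<gamma> > 0" by (simp add: inner_diff_left)
  hence x_le: "root_le P (\<gamma>s - \<delta>) \<gamma>" using root_le_of_J_set_inner_pos[OF rs base ab SA x \<gamma>] by simp
  hence "root_le P (\<gamma>s - \<delta>) (\<mu> - \<delta>)" using \<gamma>_le root_le_trans by blast
  hence "root_le P \<gamma>s \<mu>" using root_le_add_right_cancel[of P "\<gamma>s - \<delta>" \<delta> "\<mu> - \<delta>"] by simp
  hence "\<mu> = \<gamma>s" using max \<mu> unfolding max_elems_def by auto
  hence "\<gamma>s - \<delta> = \<gamma>" using x_le \<gamma>_le root_le_antisym[OF ind] by simp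
  thus False using x \<gamma> unfolding J_set_def by simp
qed

lemma J_set_diff_mem:
  assumes rs: "root_system R" and base: "is_base R P" and ab: "abelian_ideal_roots R P A"
    and SA: "S \<subseteq> A" and max: "\<gamma>s \<in> max_elems P (J_set R P A S)"
    and \<delta>: "\<delta> \<in> pos_roots R P" and x: "\<gamma>s - \<delta> \<in> J_set R P A S"
    and \<mu>: "\<mu> \<in> J_set R P A S" and \<mu>\<delta>: "\<mu> - \<delta> \<in> A"
  shows "\<mu> - \<delta> \<in> J_set R P A S"
proof -
  have "\<mu> - \<delta> \<notin> S"
  proof
    assume "\<mu> - \<delta> \<in> S"
    hence "(\<mu> - \<delta>) + \<delta> \<in> M_set R P S"
      using \<delta> \<mu> ab unfolding M_set_def J_set_def abelian_ideal_roots_def by fastforce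
    thus False using \<mu> unfolding J_set_def by simp
  qed
  thus ?thesis using diff_notin_M_set[OF assms] \<mu>\<delta> unfolding J_set_def by simp
qed

theorem lemma3p8:
  fixes R P A S :: "'a::euclidean_space set" and \<gamma>s \<delta> \<mu> :: 'a
  assumes "root_system R" and "irreducible_rs R" and "is_base R P"
    and "abelian_ideal_roots R P A"
    and "S \<in> so_subsets R A"
    and "\<gamma>s \<in> max_elems P (J_set R P A S)"
    and "\<delta> \<in> pos_roots R P" and "\<gamma>s - \<delta> \<in> J_set R P A S"
    and "\<mu> \<in> J_set R P A S"
  shows "(\<mu> - \<delta> \<in> A \<longrightarrow> \<mu> - \<delta> \<in> J_set R P A S) \<and>
         (\<mu> - 2 *\<^sub>R \<delta> \<in> A \<longrightarrow> \<mu> - \<delta> \<in> J_set R P A S \<and> \<mu> - 2 *\<^sub>R \<delta> \<in> J_set R P A S)"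
proof -
  have "S \<subseteq> A" using assms(5) unfolding so_subsets_def by simp
  note step = J_set_diff_mem[OF assms(1,3,4) this assms(6-8)]
  have "\<mu> - \<delta> \<in> J_set R P A S \<and> \<mu> - 2 *\<^sub>R \<delta> \<in> J_set R P A S" if \<nu>: "\<mu> - 2 *\<^sub>R \<delta> \<in> A"
  proof -
    have pos: "A \<subseteq> pos_roots R P" using assms(4) unfolding abelian_ideal_roots_def by simp
    have "\<mu> \<noteq> \<delta>"
      using pos_roots_uminus_notin[OF assms(1,3,7)] \<nu> pos by (auto simp: scaleR_2)
    hence "\<mu> - \<delta> \<in> R"
      using root_system_diff_mem_of_diff2[OF assms(1)] \<nu> assms(7,9) pos
      unfolding J_set_def pos_roots_def by blast
    moreover have "\<mu> - \<delta> = (\<mu> - 2 *\<^sub>R \<delta>) + \<delta>" by (simp add: scaleR_2)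
    ultimately have "\<mu> - \<delta> \<in> A" using assms(4,7) \<nu> unfolding abelian_ideal_roots_def by metis
    hence "\<mu> - \<delta> \<in> J_set R P A S" using step assms(9) by blast
    moreover have "(\<mu> - \<delta>) - \<delta> = \<mu> - 2 *\<^sub>R \<delta>" by (simp add: scaleR_2)
    ultimately show ?thesis using step \<nu> by metis
  qed
  thus ?thesis using step assms(9) by blast
qed

end
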